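(* Assume the setting below, on the mesh $S_\lambda$ with either $\lambda=N$ or $\lambda=\varepsilon^{-1}$. Suppose there are a constant $C'>0$ and numbers $\tilde\eta_1,\tilde\eta_2\ge0$ such that \[ |\tau_i[w]|\le \begin{cases} C'\tilde\eta_1\varepsilon^{-1}, & 1\le i\le J-1,\\ C'\tilde\eta_2, & J\le i\le N-1.\end{cases} \] Then \[ \|w^N-W^N\|\le C\max\{\tilde\eta_1\ln\lambda,\ \tilde\eta_2\}, \] where $C$ is independent of $\varepsilon$, $N$, $\tilde\eta_1$ and $\tilde\eta_2$.
   Context: Standing setup. Let $0<\varepsilon<1$. Let $b,c,f\in C^4[0,1]$, and let $\beta$ be a constant with $b(x)>\beta>0$ and $c(x)\ge0$ on $[0,1]$. Let $u$ be the solution of $-\varepsilon u''-b u'+cu=f$ on $(0,1)$ with $u(0)=u(1)=0$. Let $u_0$ be the solution of $-b u_0'+c u_0=f$ on $(0,1)$ with $u_0(1)=0$. Set $w=u-u_0$; it solves $-\varepsilon w''-bw'+cw=\varepsilon u_0''$, $w(0)=-u_0(0)$, $w(1)=0$. Mesh $S_\lambda$. $N$ is a positive integer. $Q\in(0,1)$ is a fixed rational number such that $J=QN$ is an integer. $a>0$ is a mesh parameter, and $\lambda\in\{N,\varepsilon^{-1}\}$. The transition point is $\xi=(a\varepsilon/\beta)\ln\lambda$, assumed to satisfy $\xi\le Q$. Set $h=\xi/J$ and $H=(1-\xi)/(N-J)$. The mesh points are $x_i=ih$ for $0\le i\le J$ and $x_i=\xi+(i-J)H$ for $J\le i\le N$.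 Write $h_i=x_i-x_{i-1}$ and $\hbar_i=(h_i+h_{i+1})/2$. Scheme. $D^+U_i=(U_{i+1}-U_i)/h_{i+1}$, $D^-U_i=(U_i-U_{i-1})/h_i$, $D''U_i=(D^+U_i-D^-U_i)/\hbar_i$. Let $\sigma(\rho)=2\rho/(e^{2\rho}-1)$ for $\rho>0$, $\sigma(0)=1$, and $\rho_i=b(x_i)h_{i+1}/(2\varepsilon)$. The ASI operator is $L^NU_i=-\varepsilon\sigma(\rho_i)D''U_i-b(x_i)D^+U_i+c(x_i)U_i$ for $1\le i\le N-1$. $W^N$ solves $W^N_0=-u_0(0)$, $L^NW^N_i=\varepsilon u_0''(x_i)$ for $1\le i\le N-1$, $W^N_N=0$. $g^N$ is the restriction of $g$ to the mesh, and $\|U\|=\max_i|U_i|$. The truncation error is $\tau_i[g]=-\varepsilon\sigma(\rho_i)D''g(x_i)-b(x_i)D^+g(x_i)+\varepsilon g''(x_i)+b(x_i)g'(x_i)$. $C$ denotes a generic positive constant independent of $\varepsilon$ and $N$. *)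

theory Defs
  imports "HOL-Analysis.Analysis"
begin

definition Ck_on :: "nat \<Rightarrow> real set \<Rightarrow> (real \<Rightarrow> real) \<Rightarrow> bool" where
  "Ck_on k S g \<longleftrightarrow> (\<exists>D :: nat \<Rightarrow> real \<Rightarrow> real. D 0 = g \<and>
      (\<forall>j<k. \<forall>x\<in>S. (D j has_real_derivative D (Suc j) x) (at x within S)) \<and>
      continuous_on S (D k))"

definition twice_diff_01 :: "(real \<Rightarrow> real) \<Rightarrow> bool" where
  "twice_diff_01 g \<longleftrightarrow> (\<forall>x\<in>{0<..<1}. (g has_real_derivative deriv g x) (at x) \<and>
      (deriv g has_real_derivative deriv (deriv g) x) (at x))"

definition bvp_solution :: "real \<Rightarrow> (real \<Rightarrow> real) \<Rightarrow> (real \<Rightarrow> real) \<Rightarrow> (real \<Rightarrow> real) \<Rightarrow> (real \<Rightarrow> real) \<Rightarrow> bool" where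
  "bvp_solution \<epsilon> b c f u \<longleftrightarrow> continuous_on {0..1} u \<and> twice_diff_01 u \<and>
     (\<forall>x\<in>{0<..<1}. - \<epsilon> * deriv (deriv u) x - b x * deriv u x + c x * u x = f x) \<and>
     u 0 = 0 \<and> u 1 = 0"

definition reduced_solution :: "(real \<Rightarrow> real) \<Rightarrow> (real \<Rightarrow> real) \<Rightarrow> (real \<Rightarrow> real) \<Rightarrow> (real \<Rightarrow> real) \<Rightarrow> bool" where
  "reduced_solution b c f u0 \<longleftrightarrow> continuous_on {0..1} u0 \<and> twice_diff_01 u0 \<and>
     (\<forall>x\<in>{0<..<1}. - b x * deriv u0 x + c x * u0 x = f x) \<and> u0 1 = 0"

definition transition :: "real \<Rightarrow> real \<Rightarrow> real \<Rightarrow> real \<Rightarrow> real" where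
  "transition \<beta> a \<epsilon> lam = (a * \<epsilon> / \<beta>) * ln lam"

definition mesh_pt :: "real \<Rightarrow> nat \<Rightarrow> nat \<Rightarrow> nat \<Rightarrow> real" where
  "mesh_pt \<xi> J N i = (if i \<le> J then real i * (\<xi> / real J)
                      else \<xi> + real (i - J) * ((1 - \<xi>) / real (N - J)))"

definition Dp :: "(nat \<Rightarrow> real) \<Rightarrow> (nat \<Rightarrow> real) \<Rightarrow> nat \<Rightarrow> real" where
  "Dp x U i = (U (Suc i) - U i) / (x (Suc i) - x i)"

definition Dm :: "(nat \<Rightarrow> real) \<Rightarrow> (nat \<Rightarrow> real) \<Rightarrow> nat \<Rightarrow> real" where
  "Dm x U i = (U i - U (i - 1)) / (x i - x (i - 1))"

definition hbar :: "(nat \<Rightarrow> real) \<Rightarrow> nat \<Rightarrow> real" where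
  "hbar x i = ((x i - x (i - 1)) + (x (Suc i) - x i)) / 2"

definition D2 :: "(nat \<Rightarrow> real) \<Rightarrow> (nat \<Rightarrow> real) \<Rightarrow> nat \<Rightarrow> real" where
  "D2 x U i = (Dp x U i - Dm x U i) / hbar x i"

definition sigma :: "real \<Rightarrow> real" where
  "sigma \<rho> = (if \<rho> = 0 then 1 else 2 * \<rho> / (exp (2 * \<rho>) - 1))"

definition rho :: "real \<Rightarrow> (real \<Rightarrow> real) \<Rightarrow> (nat \<Rightarrow> real) \<Rightarrow> nat \<Rightarrow> real" where
  "rho \<epsilon> b x i = b (x i) * (x (Suc i) - x i) / (2 * \<epsilon>)"

definition LN :: "real \<Rightarrow> (real \<Rightarrow> real) \<Rightarrow> (real \<Rightarrow> real) \<Rightarrow> (nat \<Rightarrow> real) \<Rightarrow> (nat \<Rightarrow> real) \<Rightarrow> nat \<Rightarrow> real" where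
  "LN \<epsilon> b c x U i = - \<epsilon> * sigma (rho \<epsilon> b x i) * D2 x U i - b (x i) * Dp x U i + c (x i) * U i"

definition tau :: "real \<Rightarrow> (real \<Rightarrow> real) \<Rightarrow> (nat \<Rightarrow> real) \<Rightarrow> (real \<Rightarrow> real) \<Rightarrow> nat \<Rightarrow> real" where
  "tau \<epsilon> b x g i = - \<epsilon> * sigma (rho \<epsilon> b x i) * D2 x (\<lambda>j. g (x j)) i
                    - b (x i) * Dp x (\<lambda>j. g (x j)) i
                    + \<epsilon> * deriv (deriv g) (x i) + b (x i) * deriv g (x i)"

end

theory Submission
  imports Defs
begin

text \<open>The grid error \<open>e = w\<^sup>N - W\<^sup>N\<close> vanishes at both ends of the mesh and
  \<open>L\<^sup>N e\<^sub>i = \<tau>\<^sub>i[w]\<close>. Since \<open>L\<^sup>N\<close> satisfies a discrete maximum principle on any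
  mesh, \<open>|e| \<le> \<Phi>\<close> for every mesh function \<open>\<Phi> \<ge> 0\<close> with \<open>L\<^sup>N \<Phi> \<ge> |\<tau>[w]|\<close>.
  The barrier is \<open>C' \<eta>\<^sub>2 (1 - x)/\<beta>\<close> plus \<open>C' \<eta>\<^sub>1\<close> times a function with
  \<open>L\<^sup>N \<Phi> \<ge> 1/\<epsilon>\<close> on the fine part of the mesh, \<open>L\<^sup>N \<Phi> \<ge> 0\<close> elsewhere and
  \<open>\<Phi> = O(\<xi>/\<epsilon>) = O(ln \<lambda>)\<close>: linear on the fine part and geometrically decaying on the
  coarse part, or, when \<open>\<xi>\<close> is small compared with \<open>\<epsilon>\<close>, the quadratic
  \<open>(\<xi>\<^sup>2 - (\<xi> - x)\<^sup>2)/\<epsilon>\<^sup>2\<close>, whose size \<open>(\<xi>/\<epsilon>)\<^sup>2\<close> is then \<open>O(ln \<lambda>)\<close> as well.\<close>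

section \<open>The difference operator\<close>

lemma LN_eq_Dm_Dp:
  "LN \<epsilon> b c x U i = \<epsilon> * sigma (rho \<epsilon> b x i) / hbar x i * Dm x U i
     - (\<epsilon> * sigma (rho \<epsilon> b x i) / hbar x i + b (x i)) * Dp x U i + c (x i) * U i"
  unfolding LN_def D2_def by (simp add: algebra_simps diff_divide_distrib)

lemma LN_linear:
  "LN \<epsilon> b c x (\<lambda>j. \<alpha> * U j + \<gamma> * V j) i = \<alpha> * LN \<epsilon> b c x U i + \<gamma> * LN \<epsilon> b c x V i"
  unfolding LN_eq_Dm_Dp Dm_def Dp_def
  by (simp add: algebra_simps diff_divide_distrib add_divide_distrib)

lemma LN_cong:
  assumes "U (i - 1) = V (i - 1)" and "U i = V i" and "U (Suc i) = V (Suc i)"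
  shows "LN \<epsilon> b c x U i = LN \<epsilon> b c x V i"
  unfolding LN_eq_Dm_Dp Dm_def Dp_def using assms by simp

lemma Dp_quadratic:
  assumes "x i \<noteq> x (Suc i)"
  shows "Dp x (\<lambda>j. \<alpha> + \<gamma> * x j + \<delta> * (x j)\<^sup>2) i = \<gamma> + \<delta> * (x i + x (Suc i))"
proof -
  have "x (Suc i) - x i \<noteq> 0" using assms by simp
  then show ?thesis unfolding Dp_def by (simp add: field_simps power2_eq_square)
qed

lemma Dm_quadratic:
  assumes "x (i - 1) \<noteq> x i"
  shows "Dm x (\<lambda>j. \<alpha> + \<gamma> * x j + \<delta> * (x j)\<^sup>2) i = \<gamma> + \<delta> * (x (i - 1) + x i)"
proof -
  have "x i - x (i - 1) \<noteq> 0" using assms by simp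
  then show ?thesis unfolding Dm_def by (simp add: field_simps power2_eq_square)
qed

lemma D2_quadratic:
  assumes "x (i - 1) < x i" and "x i < x (Suc i)"
  shows "D2 x (\<lambda>j. \<alpha> + \<gamma> * x j + \<delta> * (x j)\<^sup>2) i = 2 * \<delta>"
proof -
  have "D2 x (\<lambda>j. \<alpha> + \<gamma> * x j + \<delta> * (x j)\<^sup>2) i
      = ((\<gamma> + \<delta> * (x i + x (Suc i))) - (\<gamma> + \<delta> * (x (i - 1) + x i))) / hbar x i"
    unfolding D2_def using Dp_quadratic[of x i] Dm_quadratic[of x i] assms by simp
  also have "\<dots> = \<delta> * (x (Suc i) - x (i - 1)) / hbar x i" by (simp add: algebra_simps)
  also have "x (Suc i) - x (i - 1) = 2 * hbar x i" unfolding hbar_def by simp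
  also have "hbar x i > 0" unfolding hbar_def using assms by simp
  then have "\<delta> * (2 * hbar x i) / hbar x i = 2 * \<delta>" by simp
  finally show ?thesis .
qed

lemma LN_quadratic:
  assumes "x (i - 1) < x i" and "x i < x (Suc i)"
  shows "LN \<epsilon> b c x (\<lambda>j. \<alpha> + \<gamma> * x j + \<delta> * (x j)\<^sup>2) i
    = - 2 * \<epsilon> * sigma (rho \<epsilon> b x i) * \<delta> - b (x i) * (\<gamma> + \<delta> * (x i + x (Suc i)))
      + c (x i) * (\<alpha> + \<gamma> * x i + \<delta> * (x i)\<^sup>2)"
  unfolding LN_def using D2_quadratic[OF assms] Dp_quadratic[of x i] assms by simp

lemma LN_nonneg_geometric:
  assumes "Dm x U i = - A" and "Dp x U i = - A * q" and "0 \<le> A" and "0 \<le> q"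
    and "1 - q = t * q" and "\<epsilon> * sigma (rho \<epsilon> b x i) / hbar x i * t \<le> b (x i)"
    and "0 \<le> c (x i) * U i"
  shows "0 \<le> LN \<epsilon> b c x U i"
proof -
  define s where "s = \<epsilon> * sigma (rho \<epsilon> b x i) / hbar x i"
  have "LN \<epsilon> b c x U i = A * (b (x i) * q - s * (1 - q)) + c (x i) * U i"
    unfolding LN_eq_Dm_Dp s_def[symmetric] assms(1,2) by (simp add: algebra_simps)
  also have "\<dots> = A * q * (b (x i) - s * t) + c (x i) * U i"
    unfolding assms(5) by (simp add: algebra_simps)
  finally show ?thesis using assms(3,4,6,7) unfolding s_def[symmetric] by simp
qed

lemma LN_grid_eq_tau:
  "LN \<epsilon> b c x (\<lambda>j. g (x j)) i = tau \<epsilon> b x g i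
     + (- \<epsilon> * deriv (deriv g) (x i) - b (x i) * deriv g (x i) + c (x i) * g (x i))"
  unfolding LN_def tau_def by simp

lemma sigma_pos: "0 < \<rho> \<Longrightarrow> 0 < sigma \<rho>"
  unfolding sigma_def using exp_gt_one[of "2 * \<rho>"] by auto

lemma sigma_le_1:
  assumes "0 < \<rho>"
  shows "sigma \<rho> \<le> 1"
proof -
  have "2 * \<rho> \<le> exp (2 * \<rho>) - 1" using exp_ge_add_one_self[of "2 * \<rho>"] by linarith
  then show ?thesis unfolding sigma_def using assms exp_gt_one[of "2 * \<rho>"] by auto
qed

lemma sigma_ge_3_4:
  assumes "0 < \<rho>" and "\<rho> \<le> 1/8"
  shows "3/4 \<le> sigma \<rho>"
proof -
  have "exp (2 * \<rho>) \<le> 1 + 2 * \<rho> + (2 * \<rho>)\<^sup>2" using exp_bound[of "2 * \<rho>"] assms by auto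
  moreover have "(2 * \<rho>)\<^sup>2 \<le> 2 * \<rho> / 3" using assms by (simp add: power2_eq_square)
  ultimately have "exp (2 * \<rho>) - 1 \<le> 8/3 * \<rho>" by linarith
  moreover have "0 < exp (2 * \<rho>) - 1" using exp_gt_one[of "2 * \<rho>"] assms by simp
  ultimately show ?thesis unfolding sigma_def using assms by (simp add: field_simps)
qed

section \<open>Discrete maximum principle\<close>

text \<open>At the first index where a negative minimum is attained, the \<open>Dm\<close> term of \<open>LN\<close> is
  negative and the other two are nonpositive.\<close>
lemma LN_nonneg_imp_nonneg:
  assumes eps: "0 < \<epsilon>" and mono: "\<And>i. i < N \<Longrightarrow> x i < x (Suc i)"
    and coeffs: "\<And>i. 1 \<le> i \<Longrightarrow> i < N \<Longrightarrow> 0 < b (x i) \<and> 0 \<le> c (x i)"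
    and bdry: "0 \<le> Z 0" "0 \<le> Z N"
    and L: "\<And>i. 1 \<le> i \<Longrightarrow> i < N \<Longrightarrow> 0 \<le> LN \<epsilon> b c x Z i"
    and "i \<le> N"
  shows "0 \<le> Z i"
proof (rule ccontr)
  assume "\<not> 0 \<le> Z i"
  define m where "m = Min (Z ` {..N})"
  have m_le: "m \<le> Z j" if "j \<le> N" for j unfolding m_def using that by simp
  have m_neg: "m < 0" using m_le[OF \<open>i \<le> N\<close>] \<open>\<not> 0 \<le> Z i\<close> by simp
  have "m \<in> Z ` {..N}" unfolding m_def by (intro Min_in) auto
  then have ex: "\<exists>k. k \<le> N \<and> Z k = m" by auto
  define k where "k = (LEAST k. k \<le> N \<and> Z k = m)"
  have k: "k \<le> N" "Z k = m" using LeastI_ex[OF ex] unfolding k_def by auto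
  have "k \<noteq> 0" "k \<noteq> N" using bdry k m_neg by (cases "k = 0"; auto)+
  then have k_int: "1 \<le> k" "k < N" using k by auto
  have "k - 1 < k" using k_int by simp
  then have "\<not> (k - 1 \<le> N \<and> Z (k - 1) = m)" unfolding k_def by (rule not_less_Least)
  then have left: "Z (k - 1) > Z k" using m_le[of "k - 1"] k by fastforce
  have right: "Z (Suc k) \<ge> Z k" using m_le[of "Suc k"] k k_int by simp
  have steps: "x (k - 1) < x k" "x k < x (Suc k)" using mono[of "k - 1"] mono[of k] k_int by auto
  have bc: "0 < b (x k)" "0 \<le> c (x k)" using coeffs k_int by auto
  have "0 < rho \<epsilon> b x k" unfolding rho_def using bc steps eps by simp
  moreover have "0 < hbar x k" unfolding hbar_def using steps by simp
  ultimately have s: "0 < \<epsilon> * sigma (rho \<epsilon> b x k) / hbar x k" using sigma_pos eps by simp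
  have "Dm x Z k < 0" unfolding Dm_def using left steps by (simp add: divide_neg_pos)
  then have "\<epsilon> * sigma (rho \<epsilon> b x k) / hbar x k * Dm x Z k < 0" using s mult_pos_neg by blast
  moreover have "0 \<le> Dp x Z k" unfolding Dp_def using right steps by simp
  then have "0 \<le> (\<epsilon> * sigma (rho \<epsilon> b x k) / hbar x k + b (x k)) * Dp x Z k" using s bc by simp
  moreover have "c (x k) * Z k \<le> 0" using bc k m_neg by (simp add: mult_nonneg_nonpos)
  ultimately have "LN \<epsilon> b c x Z k < 0" unfolding LN_eq_Dm_Dp by linarith
  then show False using L k_int by fastforce
qed

lemma abs_le_barrier:
  assumes eps: "0 < \<epsilon>" and mono: "\<And>i. i < N \<Longrightarrow> x i < x (Suc i)"
    and coeffs: "\<And>i. 1 \<le> i \<Longrightarrow> i < N \<Longrightarrow> 0 < b (x i) \<and> 0 \<le> c (x i)"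
    and e: "e 0 = 0" "e N = 0" and \<Phi>: "0 \<le> \<Phi> 0" "0 \<le> \<Phi> N"
    and L: "\<And>i. 1 \<le> i \<Longrightarrow> i < N \<Longrightarrow> \<bar>LN \<epsilon> b c x e i\<bar> \<le> LN \<epsilon> b c x \<Phi> i"
    and "i \<le> N"
  shows "\<bar>e i\<bar> \<le> \<Phi> i"
proof -
  have "0 \<le> 1 * \<Phi> i + \<sigma> * e i" if "\<sigma> = 1 \<or> \<sigma> = -1" for \<sigma>
  proof (rule LN_nonneg_imp_nonneg[where Z = "\<lambda>j. 1 * \<Phi> j + \<sigma> * e j"])
    fix j assume "1 \<le> j" "j < N"
    then show "0 \<le> LN \<epsilon> b c x (\<lambda>j. 1 * \<Phi> j + \<sigma> * e j) j"
      unfolding LN_linear using L[of j] that by (auto simp: abs_le_iff)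
  qed (use eps mono coeffs e \<Phi> \<open>i \<le> N\<close> in auto)
  from this[of 1] this[of "-1"] show ?thesis by auto
qed

section \<open>The piecewise uniform mesh\<close>

locale shishkin_mesh =
  fixes \<xi> :: real and J N :: nat
  assumes xi_pos: "0 < \<xi>" and xi_less_1: "\<xi> < 1" and J_pos: "0 < J" and J_less_N: "J < N"
begin

abbreviation "x \<equiv> mesh_pt \<xi> J N"

definition "h = \<xi> / real J"
definition "H = (1 - \<xi>) / real (N - J)"

lemma h_pos: "0 < h"
  unfolding h_def using xi_pos J_pos by simp

lemma H_pos: "0 < H"
  unfolding H_def using xi_less_1 J_less_N by simp

lemma h_le_xi: "h \<le> \<xi>"
  unfolding h_def using xi_pos J_pos by (simp add: divide_le_eq)

lemma mesh_fine: "i \<le> J \<Longrightarrow> x i = real i * h"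
  unfolding mesh_pt_def h_def by simp

lemma mesh_coarse: "J \<le> i \<Longrightarrow> x i = \<xi> + real (i - J) * H"
  unfolding mesh_pt_def H_def h_def using J_pos by (cases "i = J") auto

lemma mesh_0: "x 0 = 0"
  using mesh_fine[of 0] by simp

lemma mesh_J: "x J = \<xi>"
  using mesh_coarse[of J] by simp

lemma mesh_N: "x N = 1"
  using mesh_coarse[of N] J_less_N unfolding H_def by simp

lemma step_fine: "i < J \<Longrightarrow> x (Suc i) - x i = h"
  using mesh_fine[of i] mesh_fine[of "Suc i"] by (simp add: algebra_simps)

lemma step_coarse: "J \<le> i \<Longrightarrow> x (Suc i) - x i = H"
  using mesh_coarse[of i] mesh_coarse[of "Suc i"] by (simp add: Suc_diff_le algebra_simps)

lemma mesh_strict_mono: "x i < x (Suc i)"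
  using step_fine[of i] step_coarse[of i] h_pos H_pos by (cases "i < J") auto

lemma mesh_mono: "i \<le> j \<Longrightarrow> x i \<le> x j"
  by (rule lift_Suc_mono_le[of x, OF less_imp_le[OF mesh_strict_mono]])

lemma mesh_strict_mono': "i < j \<Longrightarrow> x i < x j"
  by (rule lift_Suc_mono_less[of x, OF mesh_strict_mono])

lemma mesh_le_xi: "i \<le> J \<Longrightarrow> x i \<le> \<xi>"
  using mesh_mono[of i J] mesh_J by simp

lemma mesh_in_01: "i \<le> N \<Longrightarrow> x i \<in> {0..1}"
  using mesh_mono[of 0 i] mesh_mono[of i N] mesh_0 mesh_N by simp

lemma mesh_interior: "1 \<le> i \<Longrightarrow> i < N \<Longrightarrow> x i \<in> {0<..<1}"
  using mesh_strict_mono'[of 0 i] mesh_strict_mono'[of i N] mesh_0 mesh_N by simp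

end

section \<open>Barrier functions\<close>

locale shishkin_barriers = shishkin_mesh +
  fixes \<epsilon> \<beta> Bb :: real and b c :: "real \<Rightarrow> real"
  assumes eps_pos: "0 < \<epsilon>" and beta_pos: "0 < \<beta>"
    and b_bounds: "\<And>y. y \<in> {0..1} \<Longrightarrow> \<beta> < b y \<and> b y \<le> Bb"
    and c_nonneg: "\<And>y. y \<in> {0..1} \<Longrightarrow> 0 \<le> c y"
begin

lemma Bb_pos: "0 < Bb"
  using b_bounds[of 0] beta_pos by force

lemma interior_coeffs:
  assumes "1 \<le> i" and "i < N"
  shows "\<beta> < b (x i)" and "b (x i) \<le> Bb" and "0 \<le> c (x i)"
  using b_bounds[of "x i"] c_nonneg[of "x i"] mesh_in_01[of i] assms by auto

lemma interior_steps:
  assumes "1 \<le> i"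
  shows "x (i - 1) < x i" and "x i < x (Suc i)"
  using mesh_strict_mono[of "i - 1"] mesh_strict_mono[of i] assms by auto

lemma interior_sigma:
  assumes "1 \<le> i" and "i < N"
  shows "0 < sigma (rho \<epsilon> b x i)" and "sigma (rho \<epsilon> b x i) \<le> 1"
proof -
  have "0 < rho \<epsilon> b x i"
    unfolding rho_def using interior_coeffs[OF assms] interior_steps[OF assms(1)] beta_pos eps_pos
    by simp
  then show "0 < sigma (rho \<epsilon> b x i)" "sigma (rho \<epsilon> b x i) \<le> 1"
    by (simp_all add: sigma_pos sigma_le_1)
qed

lemma hbar_ge_half_H:
  assumes "J \<le> i"
  shows "H / 2 \<le> hbar x i"
  using step_coarse[OF assms] interior_steps(1)[of i] J_pos assms unfolding hbar_def by simp

definition unit_barrier :: "nat \<Rightarrow> real" where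
  "unit_barrier i = (1 - x i) / \<beta>"

lemma unit_barrier_bounds: "i \<le> N \<Longrightarrow> 0 \<le> unit_barrier i \<and> unit_barrier i \<le> 1 / \<beta>"
  unfolding unit_barrier_def using mesh_in_01[of i] beta_pos by (simp add: divide_right_mono)

lemma unit_barrier_LN:
  assumes "1 \<le> i" and "i < N"
  shows "1 \<le> LN \<epsilon> b c x unit_barrier i"
proof -
  have "unit_barrier = (\<lambda>j. 1 / \<beta> + (- 1 / \<beta>) * x j + 0 * (x j)\<^sup>2)"
    unfolding unit_barrier_def by (simp add: fun_eq_iff diff_divide_distrib)
  have "LN \<epsilon> b c x unit_barrier i = - 2 * \<epsilon> * sigma (rho \<epsilon> b x i) * 0
      - b (x i) * (- 1 / \<beta> + 0 * (x i + x (Suc i)))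
      + c (x i) * (1 / \<beta> + (- 1 / \<beta>) * x i + 0 * (x i)\<^sup>2)"
    unfolding \<open>unit_barrier = _\<close> by (rule LN_quadratic[OF interior_steps[OF assms(1)]])
  then have "LN \<epsilon> b c x unit_barrier i = b (x i) / \<beta> + c (x i) * unit_barrier i"
    by (simp add: unit_barrier_def diff_divide_distrib)
  moreover have "1 \<le> b (x i) / \<beta>" using interior_coeffs[OF assms] beta_pos by simp
  moreover have "0 \<le> c (x i) * unit_barrier i"
    using interior_coeffs[OF assms] unit_barrier_bounds[of i] assms by simp
  ultimately show ?thesis by linarith
qed

definition layer_ratio :: real where
  "layer_ratio = 1 / (1 + \<beta> * H / (2 * \<epsilon>))"

text \<open>Linear with slope \<open>-1/(\<epsilon> \<beta>)\<close> on the fine part, then decaying geometrically with ratio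
  \<open>1/(1 + \<beta> H/(2\<epsilon>))\<close>, a discrete analogue of \<open>exp (-\<beta> (x - \<xi>)/(2\<epsilon>))\<close>.\<close>
definition layer_barrier :: "nat \<Rightarrow> real" where
  "layer_barrier i = (if i \<le> J then ((\<xi> - x i) / \<epsilon> + 2 / \<beta>) / \<beta>
                      else 2 * layer_ratio ^ (i - J) / \<beta>\<^sup>2)"

lemma layer_ratio_bounds: "0 < layer_ratio" "layer_ratio \<le> 1"
proof -
  have "0 < \<beta> * H / (2 * \<epsilon>)" using beta_pos H_pos eps_pos by simp
  then show "0 < layer_ratio" "layer_ratio \<le> 1" unfolding layer_ratio_def by simp_all
qed

lemma one_minus_layer_ratio: "1 - layer_ratio = \<beta> * H / (2 * \<epsilon>) * layer_ratio"
proof -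
  have "0 < \<beta> * H" using beta_pos H_pos by simp
  then have "0 < 2 * \<epsilon> + \<beta> * H" using eps_pos by simp
  then show ?thesis unfolding layer_ratio_def using eps_pos by (simp add: field_simps)
qed

lemma layer_barrier_bounds:
  assumes "i \<le> N"
  shows "0 \<le> layer_barrier i \<and> layer_barrier i \<le> (\<xi> / \<epsilon> + 2 / \<beta>) / \<beta>"
proof (cases "i \<le> J")
  case True
  have "0 \<le> (\<xi> - x i) / \<epsilon>" "(\<xi> - x i) / \<epsilon> \<le> \<xi> / \<epsilon>"
    using mesh_le_xi[OF True] mesh_in_01[of i] assms eps_pos by (simp_all add: divide_right_mono)
  then show ?thesis unfolding layer_barrier_def using True beta_pos by (simp add: divide_right_mono)
next
  case False
  have "layer_ratio ^ (i - J) \<le> 1" using layer_ratio_bounds by (simp add: power_le_one)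
  then have "2 * layer_ratio ^ (i - J) / \<beta>\<^sup>2 \<le> (2 / \<beta>) / \<beta>"
    using beta_pos by (simp add: divide_right_mono power2_eq_square)
  also have "\<dots> \<le> (\<xi> / \<epsilon> + 2 / \<beta>) / \<beta>"
    using xi_pos eps_pos beta_pos by (intro divide_right_mono) auto
  finally show ?thesis unfolding layer_barrier_def using False layer_ratio_bounds by simp
qed

lemma layer_barrier_LN_fine:
  assumes "1 \<le> i" and "i < J"
  shows "1 / \<epsilon> \<le> LN \<epsilon> b c x layer_barrier i"
proof -
  have iN: "i < N" using assms J_less_N by simp
  define V where "V = (\<lambda>j. (\<xi> / \<epsilon> + 2 / \<beta>) / \<beta> + (- 1 / (\<epsilon> * \<beta>)) * x j + 0 * (x j)\<^sup>2)"
  have "layer_barrier j = V j" if "j \<le> J" for j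
    unfolding layer_barrier_def V_def using that eps_pos beta_pos by (simp add: field_simps)
  then have "LN \<epsilon> b c x layer_barrier i = LN \<epsilon> b c x V i"
    using assms by (intro LN_cong) auto
  also have "\<dots> = - 2 * \<epsilon> * sigma (rho \<epsilon> b x i) * 0
      - b (x i) * (- 1 / (\<epsilon> * \<beta>) + 0 * (x i + x (Suc i))) + c (x i) * V i"
    unfolding V_def by (rule LN_quadratic[OF interior_steps[OF assms(1)]])
  also have "\<dots> = b (x i) / (\<epsilon> * \<beta>) + c (x i) * V i" by simp
  finally have L: "LN \<epsilon> b c x layer_barrier i = b (x i) / (\<epsilon> * \<beta>) + c (x i) * layer_barrier i"
    using \<open>\<And>j. j \<le> J \<Longrightarrow> layer_barrier j = V j\<close>[of i] assms by simp
  have "1 / \<epsilon> \<le> b (x i) / (\<epsilon> * \<beta>)"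
    using interior_coeffs[OF assms(1) iN] beta_pos eps_pos by (simp add: field_simps)
  moreover have "0 \<le> c (x i) * layer_barrier i"
    using interior_coeffs[OF assms(1) iN] layer_barrier_bounds[of i] iN by simp
  ultimately show ?thesis unfolding L by linarith
qed

lemma layer_barrier_Suc:
  assumes "J \<le> i"
  shows "layer_barrier (Suc i) = layer_ratio * layer_barrier i"
  unfolding layer_barrier_def using assms mesh_J
  by (cases "i = J") (simp_all add: Suc_diff_le power2_eq_square)

lemma layer_barrier_J: "layer_barrier J = 2 / \<beta>\<^sup>2"
  unfolding layer_barrier_def mesh_J by (simp add: power2_eq_square)

lemma layer_barrier_Dm_J: "Dm x layer_barrier J = - 1 / (\<epsilon> * \<beta>)"
proof -
  have step: "x J - x (J - 1) = h" using step_fine[of "J - 1"] J_pos by simp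
  then have "layer_barrier (J - 1) = (h / \<epsilon> + 2 / \<beta>) / \<beta>"
    unfolding layer_barrier_def using mesh_J by simp
  then have "layer_barrier J - layer_barrier (J - 1) = - h / (\<epsilon> * \<beta>)"
    unfolding layer_barrier_J using eps_pos beta_pos by (simp add: field_simps power2_eq_square)
  with step show ?thesis unfolding Dm_def using h_pos by simp
qed

lemma scaled_sigma_le_b:
  assumes "J \<le> i" and "i < N"
  shows "\<epsilon> * sigma (rho \<epsilon> b x i) / hbar x i * (\<beta> * H / (2 * \<epsilon>)) \<le> b (x i)"
proof -
  have i1: "1 \<le> i" using assms J_pos by simp
  have "\<epsilon> * sigma (rho \<epsilon> b x i) / hbar x i * (\<beta> * H / (2 * \<epsilon>))
      = sigma (rho \<epsilon> b x i) * \<beta> * (H / (2 * hbar x i))"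
    using eps_pos by (simp add: field_simps)
  also have "\<dots> \<le> 1 * \<beta> * 1"
    using interior_sigma[OF i1 assms(2)] hbar_ge_half_H[OF assms(1)] H_pos beta_pos
    by (intro mult_mono) auto
  also have "\<dots> < b (x i)" using interior_coeffs[OF i1 assms(2)] by simp
  finally show ?thesis by simp
qed

lemma layer_barrier_LN_coarse:
  assumes "J \<le> i" and "i < N"
  shows "0 \<le> LN \<epsilon> b c x layer_barrier i"
proof -
  let ?q = layer_ratio and ?t = "\<beta> * H / (2 * \<epsilon>)"
  define A where "A = ?t * layer_barrier i / H"
  have "Dp x layer_barrier i = - A * ?q"
  proof -
    have "layer_barrier (Suc i) - layer_barrier i = - (1 - ?q) * layer_barrier i"
      unfolding layer_barrier_Suc[OF assms(1)] by (simp add: algebra_simps)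
    then show ?thesis
      unfolding Dp_def A_def step_coarse[OF assms(1)] one_minus_layer_ratio by simp
  qed
  moreover have "Dm x layer_barrier i = - A"
  proof (cases "i = J")
    case True
    then show ?thesis
      unfolding A_def True layer_barrier_Dm_J layer_barrier_J using H_pos eps_pos beta_pos
      by (simp add: field_simps power2_eq_square)
  next
    case False
    then have "J \<le> i - 1" and i: "i = Suc (i - 1)" using assms by auto
    then have "layer_barrier i = ?q * layer_barrier (i - 1)" "x i - x (i - 1) = H"
      using layer_barrier_Suc step_coarse by (metis, metis)
    then have "layer_barrier i - layer_barrier (i - 1) = - (1 - ?q) * layer_barrier (i - 1)"
      by (simp add: algebra_simps)
    then show ?thesis
      unfolding Dm_def A_def one_minus_layer_ratio using \<open>x i - x (i - 1) = H\<close>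
        \<open>layer_barrier i = ?q * layer_barrier (i - 1)\<close> by simp
  qed
  moreover have "0 \<le> A"
    unfolding A_def using layer_barrier_bounds[of i] assms H_pos eps_pos beta_pos by simp
  moreover have "0 \<le> c (x i) * layer_barrier i"
    using interior_coeffs[of i] layer_barrier_bounds[of i] assms J_pos by simp
  ultimately show ?thesis
    using layer_ratio_bounds scaled_sigma_le_b[OF assms] one_minus_layer_ratio
    by (intro LN_nonneg_geometric[where t = ?t]) auto
qed

definition quad_barrier :: "nat \<Rightarrow> real" where
  "quad_barrier i = (if i \<le> J then (2 * \<xi> * x i - (x i)\<^sup>2) / \<epsilon>\<^sup>2 else (\<xi> / \<epsilon>)\<^sup>2)"

lemma quad_barrier_coarse: "J \<le> i \<Longrightarrow> quad_barrier i = (\<xi> / \<epsilon>)\<^sup>2"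
  unfolding quad_barrier_def using mesh_J by (cases "i = J") (simp_all add: power2_eq_square field_simps)

lemma quad_barrier_bounds: "0 \<le> quad_barrier i \<and> quad_barrier i \<le> (\<xi> / \<epsilon>)\<^sup>2"
proof (cases "i \<le> J")
  case True
  have "0 \<le> x i * (2 * \<xi> - x i)"
    using mesh_in_01[of i] mesh_le_xi[OF True] True J_less_N xi_pos by simp
  then have lower: "0 \<le> 2 * \<xi> * x i - (x i)\<^sup>2" by (simp add: algebra_simps power2_eq_square)
  have "2 * \<xi> * x i - (x i)\<^sup>2 = \<xi>\<^sup>2 - (\<xi> - x i)\<^sup>2"
    by (simp add: power2_eq_square algebra_simps)
  then have "2 * \<xi> * x i - (x i)\<^sup>2 \<le> \<xi>\<^sup>2" by simp
  with lower show ?thesis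
    unfolding quad_barrier_def using True by (simp add: divide_right_mono power_divide)
qed (simp add: quad_barrier_def)

lemma quad_barrier_LN_fine:
  assumes small: "4 * Bb * \<xi> \<le> \<epsilon>" and "1 \<le> i" and "i < J"
  shows "1 / \<epsilon> \<le> LN \<epsilon> b c x quad_barrier i"
proof -
  have iN: "i < N" using assms J_less_N by simp
  note coeffs = interior_coeffs[OF assms(2) iN]
  define V where "V = (\<lambda>j. 0 + (2 * \<xi> / \<epsilon>\<^sup>2) * x j + (- 1 / \<epsilon>\<^sup>2) * (x j)\<^sup>2)"
  have V: "quad_barrier j = V j" if "j \<le> J" for j
    unfolding quad_barrier_def V_def using that by (simp add: diff_divide_distrib)
  define \<sigma> where "\<sigma> = sigma (rho \<epsilon> b x i)"
  have "LN \<epsilon> b c x quad_barrier i = LN \<epsilon> b c x V i"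
    using V assms by (intro LN_cong) auto
  also have "\<dots> = - 2 * \<epsilon> * \<sigma> * (- 1 / \<epsilon>\<^sup>2)
      - b (x i) * (2 * \<xi> / \<epsilon>\<^sup>2 + (- 1 / \<epsilon>\<^sup>2) * (x i + x (Suc i))) + c (x i) * V i"
    unfolding V_def \<sigma>_def by (rule LN_quadratic[OF interior_steps[OF assms(2)]])
  also have "\<dots> = 2 * \<sigma> / \<epsilon> - b (x i) * (2 * \<xi> - x i - x (Suc i)) / \<epsilon>\<^sup>2 + c (x i) * quad_barrier i"
    using V[of i] assms eps_pos by (simp add: field_simps power2_eq_square)
  finally have L: "LN \<epsilon> b c x quad_barrier i
      = 2 * \<sigma> / \<epsilon> - b (x i) * (2 * \<xi> - x i - x (Suc i)) / \<epsilon>\<^sup>2 + c (x i) * quad_barrier i" .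
  have "b (x i) * h \<le> Bb * \<xi>" using coeffs h_pos h_le_xi beta_pos by (intro mult_mono) auto
  then have "rho \<epsilon> b x i \<le> 1/8"
    unfolding rho_def step_fine[OF assms(3)] using small eps_pos by (simp add: field_simps)
  moreover have "0 < rho \<epsilon> b x i"
    unfolding rho_def step_fine[OF assms(3)] using coeffs beta_pos h_pos eps_pos by simp
  ultimately have "3/4 \<le> \<sigma>" unfolding \<sigma>_def by (rule sigma_ge_3_4[rotated])
  then have diffusion: "3 / (2 * \<epsilon>) \<le> 2 * \<sigma> / \<epsilon>" using eps_pos by (simp add: field_simps)
  have "b (x i) * (2 * \<xi> - x i - x (Suc i)) \<le> Bb * (2 * \<xi>)"
    using coeffs beta_pos mesh_in_01[of i] mesh_in_01[of "Suc i"] mesh_le_xi[of i] mesh_le_xi[of "Suc i"]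
      assms iN by (intro mult_mono) auto
  then have "b (x i) * (2 * \<xi> - x i - x (Suc i)) \<le> \<epsilon> / 2" using small by linarith
  then have "b (x i) * (2 * \<xi> - x i - x (Suc i)) / \<epsilon>\<^sup>2 \<le> (\<epsilon> / 2) / \<epsilon>\<^sup>2"
    by (intro divide_right_mono) (simp_all add: zero_le_power2)
  also have "(\<epsilon> / 2) / \<epsilon>\<^sup>2 = 1 / (2 * \<epsilon>)" by (simp add: power2_eq_square)
  finally have convection: "b (x i) * (2 * \<xi> - x i - x (Suc i)) / \<epsilon>\<^sup>2 \<le> 1 / (2 * \<epsilon>)" .
  have "0 \<le> c (x i) * quad_barrier i" using coeffs quad_barrier_bounds[of i] by simp
  moreover have "3 / (2 * \<epsilon>) - 1 / (2 * \<epsilon>) = 1 / \<epsilon>" by simp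
  ultimately show ?thesis unfolding L using diffusion convection by linarith
qed

lemma quad_barrier_LN_coarse:
  assumes "J \<le> i" and "i < N"
  shows "0 \<le> LN \<epsilon> b c x quad_barrier i"
proof -
  have i1: "1 \<le> i" using assms J_pos by simp
  have Dp: "Dp x quad_barrier i = 0"
    unfolding Dp_def using quad_barrier_coarse assms by simp
  have "0 \<le> Dm x quad_barrier i"
    unfolding Dm_def using quad_barrier_coarse[OF assms(1)] quad_barrier_bounds[of "i - 1"]
      interior_steps[OF i1] by simp
  moreover have "0 \<le> \<epsilon> * sigma (rho \<epsilon> b x i) / hbar x i"
    using interior_sigma[OF i1 assms(2)] hbar_ge_half_H[OF assms(1)] H_pos eps_pos by simp
  moreover have "0 \<le> c (x i) * quad_barrier i"
    using interior_coeffs[OF i1 assms(2)] quad_barrier_bounds[of i] by simp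
  ultimately have "0 \<le> \<epsilon> * sigma (rho \<epsilon> b x i) / hbar x i * Dm x quad_barrier i
      + c (x i) * quad_barrier i"
    by (metis add_nonneg_nonneg mult_nonneg_nonneg)
  then show ?thesis by (simp only: LN_eq_Dm_Dp Dp mult_zero_right diff_zero)
qed

definition fine_barrier :: "real \<Rightarrow> (nat \<Rightarrow> real) \<Rightarrow> bool" where
  "fine_barrier M \<Phi> \<longleftrightarrow> (\<forall>i\<le>N. 0 \<le> \<Phi> i \<and> \<Phi> i \<le> M)
     \<and> (\<forall>i. 1 \<le> i \<and> i < J \<longrightarrow> 1 / \<epsilon> \<le> LN \<epsilon> b c x \<Phi> i)
     \<and> (\<forall>i. J \<le> i \<and> i < N \<longrightarrow> 0 \<le> LN \<epsilon> b c x \<Phi> i)"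

lemma fine_barrier_mono: "fine_barrier M \<Phi> \<Longrightarrow> M \<le> M' \<Longrightarrow> fine_barrier M' \<Phi>"
  unfolding fine_barrier_def by force

lemma fine_barrier_layer: "fine_barrier ((\<xi> / \<epsilon> + 2 / \<beta>) / \<beta>) layer_barrier"
  unfolding fine_barrier_def
  using layer_barrier_bounds layer_barrier_LN_fine layer_barrier_LN_coarse by blast

lemma fine_barrier_quad: "4 * Bb * \<xi> \<le> \<epsilon> \<Longrightarrow> fine_barrier ((\<xi> / \<epsilon>)\<^sup>2) quad_barrier"
  unfolding fine_barrier_def
  using quad_barrier_bounds quad_barrier_LN_fine quad_barrier_LN_coarse by blast

lemma error_le_fine_barrier:
  assumes \<Phi>: "fine_barrier M \<Phi>" and e: "e 0 = 0" "e N = 0" and K: "0 \<le> K1" "0 \<le> K2"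
    and fine: "\<And>i. 1 \<le> i \<Longrightarrow> i < J \<Longrightarrow> \<bar>LN \<epsilon> b c x e i\<bar> \<le> K1 / \<epsilon>"
    and coarse: "\<And>i. J \<le> i \<Longrightarrow> i < N \<Longrightarrow> \<bar>LN \<epsilon> b c x e i\<bar> \<le> K2"
    and "i \<le> N"
  shows "\<bar>e i\<bar> \<le> K1 * M + K2 / \<beta>"
proof -
  define \<Psi> where "\<Psi> = (\<lambda>j. K1 * \<Phi> j + K2 * unit_barrier j)"
  have \<Phi>_bounds: "0 \<le> \<Phi> j" "\<Phi> j \<le> M" if "j \<le> N" for j
    using \<Phi> that unfolding fine_barrier_def by auto
  have "\<bar>e i\<bar> \<le> \<Psi> i"
  proof (rule abs_le_barrier[where e = e and \<Phi> = \<Psi>])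
    fix j assume j: "1 \<le> j" "j < N"
    then show "0 < b (x j) \<and> 0 \<le> c (x j)" using interior_coeffs beta_pos by force
    have "K2 \<le> K2 * LN \<epsilon> b c x unit_barrier j"
      using unit_barrier_LN[OF j] K mult_left_mono[of 1 _ K2] by simp
    moreover have "K1 / \<epsilon> \<le> K1 * LN \<epsilon> b c x \<Phi> j" if "j < J"
      using \<Phi> that j K mult_left_mono[of "1 / \<epsilon>" _ K1] unfolding fine_barrier_def by simp
    moreover have "0 \<le> K1 * LN \<epsilon> b c x \<Phi> j" if "J \<le> j"
      using \<Phi> that j K unfolding fine_barrier_def by simp
    ultimately show "\<bar>LN \<epsilon> b c x e j\<bar> \<le> LN \<epsilon> b c x \<Psi> j"
      unfolding \<Psi>_def LN_linear using fine[OF j(1)] coarse[OF _ j(2)] K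
      by (cases "j < J") (auto intro: order_trans)
  qed (use eps_pos mesh_strict_mono e \<Phi>_bounds unit_barrier_bounds K \<open>i \<le> N\<close>
    in \<open>auto simp: \<Psi>_def\<close>)
  also have "\<Psi> i \<le> K1 * M + K2 * (1 / \<beta>)"
    unfolding \<Psi>_def using \<Phi>_bounds[OF \<open>i \<le> N\<close>] unit_barrier_bounds[OF \<open>i \<le> N\<close>] K
    by (intro add_mono mult_left_mono) auto
  finally show ?thesis by simp
qed

end

definition layer_const :: "real \<Rightarrow> real \<Rightarrow> real \<Rightarrow> real" where
  "layer_const \<beta> Bb a = a / \<beta>\<^sup>2 + 8 * a * Bb / \<beta> ^ 3 + a / (4 * \<beta> * Bb)"

lemma layer_const_pos: "0 < \<beta> \<Longrightarrow> 0 < a \<Longrightarrow> 0 < Bb \<Longrightarrow> 0 < layer_const \<beta> Bb a"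
  unfolding layer_const_def by (intro add_pos_pos) auto

text \<open>The layer barrier alone would not do: its bound contains the term \<open>2/\<beta>\<^sup>2\<close>, which is
  not \<open>O(L)\<close> as \<open>L \<rightarrow> 0\<close>. For \<open>4 a Bb L \<le> \<beta>\<close> the quadratic barrier is used instead.\<close>
lemma (in shishkin_barriers) fine_barrier_exists:
  assumes a: "0 < a" and L: "0 < L" and xi: "\<xi> = a * \<epsilon> / \<beta> * L"
  shows "\<exists>\<Phi>. fine_barrier (layer_const \<beta> Bb a * L) \<Phi>"
proof -
  have xi_eps: "\<xi> / \<epsilon> = a * L / \<beta>" unfolding xi using eps_pos by simp
  have nonneg: "0 \<le> a / \<beta>\<^sup>2 * L" "0 \<le> 8 * a * Bb / \<beta> ^ 3 * L" "0 \<le> a / (4 * \<beta> * Bb) * L"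
    using a L Bb_pos beta_pos by simp_all
  show ?thesis
  proof (cases "\<beta> < 4 * a * Bb * L")
    case True
    then have "2 / \<beta>\<^sup>2 \<le> 8 * a * Bb / \<beta> ^ 3 * L"
      using beta_pos by (simp add: field_simps power2_eq_square power3_eq_cube)
    moreover have "(\<xi> / \<epsilon> + 2 / \<beta>) / \<beta> = a / \<beta>\<^sup>2 * L + 2 / \<beta>\<^sup>2"
      unfolding xi_eps using beta_pos by (simp add: field_simps power2_eq_square)
    ultimately have "(\<xi> / \<epsilon> + 2 / \<beta>) / \<beta> \<le> layer_const \<beta> Bb a * L"
      unfolding layer_const_def distrib_right using nonneg by linarith
    then show ?thesis using fine_barrier_layer fine_barrier_mono by blast
  next
    case False
    then have small: "4 * Bb * \<xi> \<le> \<epsilon>"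
      unfolding xi using eps_pos beta_pos by (simp add: field_simps)
    have "(\<xi> / \<epsilon>)\<^sup>2 = (a / \<beta>)\<^sup>2 * L * L" unfolding xi_eps by (simp add: power2_eq_square)
    also have "\<dots> \<le> (a / \<beta>)\<^sup>2 * L * (\<beta> / (4 * a * Bb))"
      using False L a Bb_pos by (intro mult_left_mono) (simp_all add: field_simps)
    also have "\<dots> = a / (4 * \<beta> * Bb) * L"
      using a Bb_pos beta_pos by (simp add: field_simps power2_eq_square)
    also have "\<dots> \<le> layer_const \<beta> Bb a * L"
      unfolding layer_const_def distrib_right using nonneg by linarith
    finally show ?thesis using fine_barrier_quad[OF small] fine_barrier_mono by blast
  qed
qed

section \<open>The error bound\<close>

lemma Ck_on_continuous:
  assumes "Ck_on k S g"
  shows "continuous_on S g"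
proof -
  obtain D where D: "D 0 = g" "\<forall>j<k. \<forall>y\<in>S. (D j has_real_derivative D (Suc j) y) (at y within S)"
    "continuous_on S (D k)"
    using assms unfolding Ck_on_def by blast
  show ?thesis
  proof (cases k)
    case 0
    then show ?thesis using D by simp
  next
    case (Suc m)
    then show ?thesis using D by (intro DERIV_continuous_on[of S g "D 1"]) auto
  qed
qed

lemma twice_diff_01_deriv_diff:
  assumes "twice_diff_01 u" and "twice_diff_01 v" and "y \<in> {0<..<1}"
  shows "deriv (\<lambda>z. u z - v z) y = deriv u y - deriv v y"
  using assms unfolding twice_diff_01_def by (intro DERIV_imp_deriv DERIV_diff) auto

lemma twice_diff_01_deriv2_diff:
  assumes u: "twice_diff_01 u" and v: "twice_diff_01 v" and y: "y \<in> {0<..<1}"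
  shows "deriv (deriv (\<lambda>z. u z - v z)) y = deriv (deriv u) y - deriv (deriv v) y"
proof -
  have "\<forall>\<^sub>F z in nhds y. z \<in> {0<..<1}"
    using y by (intro eventually_nhds_in_open) auto
  then have "\<forall>\<^sub>F z in nhds y. deriv (\<lambda>z. u z - v z) z = deriv u z - deriv v z"
    by (rule eventually_mono) (rule twice_diff_01_deriv_diff[OF u v])
  then have "deriv (deriv (\<lambda>z. u z - v z)) y = deriv (\<lambda>z. deriv u z - deriv v z) y"
    by (rule deriv_cong_ev) simp
  also have "\<dots> = deriv (deriv u) y - deriv (deriv v) y"
    using u v y unfolding twice_diff_01_def by (intro DERIV_imp_deriv DERIV_diff) auto
  finally show ?thesis .
qed

lemma LN_grid_error_eq_tau:
  assumes u: "bvp_solution \<epsilon> b c f u" and u0: "reduced_solution b c f u0"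
    and y: "x i \<in> {0<..<1}" and W: "LN \<epsilon> b c x W i = \<epsilon> * deriv (deriv u0) (x i)"
  shows "LN \<epsilon> b c x (\<lambda>j. (u (x j) - u0 (x j)) - W j) i = tau \<epsilon> b x (\<lambda>z. u z - u0 z) i"
proof -
  have u': "twice_diff_01 u" "- \<epsilon> * deriv (deriv u) (x i) - b (x i) * deriv u (x i) + c (x i) * u (x i) = f (x i)"
    using u y unfolding bvp_solution_def by auto
  have u0': "twice_diff_01 u0" "- b (x i) * deriv u0 (x i) + c (x i) * u0 (x i) = f (x i)"
    using u0 y unfolding reduced_solution_def by auto
  have "LN \<epsilon> b c x (\<lambda>j. 1 * (u (x j) - u0 (x j)) + (- 1) * W j) i
      = LN \<epsilon> b c x (\<lambda>j. u (x j) - u0 (x j)) i - LN \<epsilon> b c x W i"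
    unfolding LN_linear by simp
  then show ?thesis
    using LN_grid_eq_tau[of \<epsilon> b c x "\<lambda>z. u z - u0 z" i] u'(2) u0'(2) W
      twice_diff_01_deriv_diff[OF u'(1) u0'(1) y] twice_diff_01_deriv2_diff[OF u'(1) u0'(1) y]
    by (simp add: algebra_simps)
qed

lemma mesh_parameters:
  assumes "0 < Q" and "Q < 1" and "0 < N" and "real J = Q * real N"
    and "lam \<in> {real N, 1 / \<epsilon>}" and "0 < \<epsilon>" and "\<epsilon> < 1"
  shows "0 < J" and "J < N" and "0 < ln lam"
proof -
  have "0 < Q * real N" "Q * real N < 1 * real N" using assms by simp_all
  then show "0 < J" "J < N" using assms(4) by simp_all
  then have "1 < lam" using assms(5-7) by auto
  then show "0 < ln lam" by simp
qed

lemma shishkin_error_bound: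
  fixes \<epsilon> \<beta> a lam :: real and N J :: nat
  defines "x \<equiv> mesh_pt (transition \<beta> a \<epsilon> lam) J N"
  assumes coeffs: "\<forall>y\<in>{0..1}. \<beta> < b y \<and> b y \<le> Bb" "\<forall>y\<in>{0..1}. 0 \<le> c y"
    and params: "0 < \<beta>" "0 < a" "0 < Q" "Q < 1" "0 \<le> C'"
    and u0: "reduced_solution b c f u0"
    and mesh: "0 < \<epsilon>" "\<epsilon> < 1" "0 < N" "real J = Q * real N" "lam \<in> {real N, 1 / \<epsilon>}"
      "transition \<beta> a \<epsilon> lam \<le> Q"
    and u: "bvp_solution \<epsilon> b c f u"
    and W: "W 0 = - u0 0" "W N = 0"
      "\<forall>i. 1 \<le> i \<and> i \<le> N - 1 \<longrightarrow> LN \<epsilon> b c x W i = \<epsilon> * deriv (deriv u0) (x i)"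
    and \<eta>: "0 \<le> \<eta>1" "0 \<le> \<eta>2"
    and tau_fine: "\<forall>i. 1 \<le> i \<and> i \<le> J - 1 \<longrightarrow> \<bar>tau \<epsilon> b x (\<lambda>z. u z - u0 z) i\<bar> \<le> C' * \<eta>1 / \<epsilon>"
    and tau_coarse: "\<forall>i. J \<le> i \<and> i \<le> N - 1 \<longrightarrow> \<bar>tau \<epsilon> b x (\<lambda>z. u z - u0 z) i\<bar> \<le> C' * \<eta>2"
    and "i \<le> N"
  shows "\<bar>(u (x i) - u0 (x i)) - W i\<bar> \<le> C' * (layer_const \<beta> Bb a + 1 / \<beta>) * max (\<eta>1 * ln lam) \<eta>2"
proof -
  define \<xi> where "\<xi> = transition \<beta> a \<epsilon> lam"
  define e where "e = (\<lambda>j. (u (x j) - u0 (x j)) - W j)"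
  have J: "0 < J" "J < N" and lam: "0 < ln lam"
    using mesh_parameters[OF params(3,4) mesh(3,4,5,1,2)] by simp_all
  have xi: "\<xi> = a * \<epsilon> / \<beta> * ln lam" unfolding \<xi>_def transition_def ..
  have "0 < \<xi>" unfolding xi using params mesh lam by simp
  moreover have "\<xi> < 1" unfolding \<xi>_def using mesh(6) params(4) by linarith
  ultimately interpret shishkin_barriers \<xi> J N \<epsilon> \<beta> Bb b c
    using J params(1) mesh(1) coeffs by unfold_locales simp_all
  have x: "x = mesh_pt \<xi> J N" unfolding x_def \<xi>_def ..
  obtain \<Phi> where \<Phi>: "fine_barrier (layer_const \<beta> Bb a * ln lam) \<Phi>"
    using fine_barrier_exists[OF params(2) lam xi] by blast
  have LN_e: "LN \<epsilon> b c x e j = tau \<epsilon> b x (\<lambda>z. u z - u0 z) j" if "1 \<le> j" "j < N" for j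
    unfolding e_def using LN_grid_error_eq_tau[OF u u0] mesh_interior W(3) that x by simp
  have "e 0 = 0" "e N = 0"
    unfolding e_def using W mesh_0 mesh_N u u0 x unfolding bvp_solution_def reduced_solution_def by simp_all
  moreover have "\<bar>LN \<epsilon> b c x e j\<bar> \<le> C' * \<eta>1 / \<epsilon>" if "1 \<le> j" "j < J" for j
    using LN_e[of j] tau_fine that J by simp
  moreover have "\<bar>LN \<epsilon> b c x e j\<bar> \<le> C' * \<eta>2" if "J \<le> j" "j < N" for j
    using LN_e[of j] tau_coarse that J by simp
  ultimately have "\<bar>e i\<bar> \<le> C' * \<eta>1 * (layer_const \<beta> Bb a * ln lam) + C' * \<eta>2 / \<beta>"
    using error_le_fine_barrier[OF \<Phi>, of e "C' * \<eta>1" "C' * \<eta>2" i] params \<eta> \<open>i \<le> N\<close> x by simp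
  also have "\<dots> = C' * (layer_const \<beta> Bb a * (\<eta>1 * ln lam) + \<eta>2 / \<beta>)"
    by (simp add: algebra_simps)
  also have "\<dots> \<le> C' * (layer_const \<beta> Bb a * max (\<eta>1 * ln lam) \<eta>2 + max (\<eta>1 * ln lam) \<eta>2 / \<beta>)"
    using params layer_const_pos[OF params(1,2) Bb_pos]
    by (intro mult_left_mono add_mono divide_right_mono) auto
  finally show ?thesis unfolding e_def by (simp add: algebra_simps)
qed

theorem theorem3:
  fixes b c f u0 :: "real \<Rightarrow> real" and \<beta> a Q C' :: real
  assumes "Ck_on 4 {0..1} b" and "Ck_on 4 {0..1} c" and "Ck_on 4 {0..1} f"
    and "\<beta> > 0" and "\<forall>x\<in>{0..1}. b x > \<beta>" and "\<forall>x\<in>{0..1}. c x \<ge> 0"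
    and "Q \<in> \<rat>" and "0 < Q" and "Q < 1" and "a > 0" and "C' > 0"
    and "reduced_solution b c f u0"
  shows "\<exists>C>0. \<forall>(\<epsilon>::real) (N::nat) (J::nat) (lam::real) (u::real \<Rightarrow> real) (W::nat \<Rightarrow> real)
            (\<eta>1::real) (\<eta>2::real).
      0 < \<epsilon> \<and> \<epsilon> < 1 \<and> N > 0 \<and> real J = Q * real N \<and>
      lam \<in> {real N, 1 / \<epsilon>} \<and> transition \<beta> a \<epsilon> lam \<le> Q \<and>
      bvp_solution \<epsilon> b c f u \<and>
      W 0 = - u0 0 \<and> W N = 0 \<and>
      (\<forall>i. 1 \<le> i \<and> i \<le> N - 1 \<longrightarrow>
         LN \<epsilon> b c (mesh_pt (transition \<beta> a \<epsilon> lam) J N) W i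
           = \<epsilon> * deriv (deriv u0) (mesh_pt (transition \<beta> a \<epsilon> lam) J N i)) \<and>
      \<eta>1 \<ge> 0 \<and> \<eta>2 \<ge> 0 \<and>
      (\<forall>i. 1 \<le> i \<and> i \<le> J - 1 \<longrightarrow>
         \<bar>tau \<epsilon> b (mesh_pt (transition \<beta> a \<epsilon> lam) J N) (\<lambda>x. u x - u0 x) i\<bar> \<le> C' * \<eta>1 / \<epsilon>) \<and>
      (\<forall>i. J \<le> i \<and> i \<le> N - 1 \<longrightarrow>
         \<bar>tau \<epsilon> b (mesh_pt (transition \<beta> a \<epsilon> lam) J N) (\<lambda>x. u x - u0 x) i\<bar> \<le> C' * \<eta>2)
      \<longrightarrow> (\<forall>i\<le>N. \<bar>(u (mesh_pt (transition \<beta> a \<epsilon> lam) J N i)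
                        - u0 (mesh_pt (transition \<beta> a \<epsilon> lam) J N i)) - W i\<bar>
                    \<le> C * max (\<eta>1 * ln lam) \<eta>2)"
proof -
  obtain y0 where "y0 \<in> {0..1}" and "\<forall>y\<in>{0..1}. b y \<le> b y0"
    using continuous_attains_sup[OF compact_Icc _ Ck_on_continuous[OF assms(1)]] by auto
  then have b_bounds: "\<forall>y\<in>{0..1}. \<beta> < b y \<and> b y \<le> b y0" using assms(5) by auto
  then have "0 < b y0" using \<open>y0 \<in> {0..1}\<close> assms(4) by force
  then have "0 < layer_const \<beta> (b y0) a + 1 / \<beta>"
    using layer_const_pos[OF assms(4,10)] assms(4) by (simp add: add_pos_pos)
  then have "0 < C' * (layer_const \<beta> (b y0) a + 1 / \<beta>)" using assms(11) by simp
  then show ?thesis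
    using shishkin_error_bound[OF b_bounds assms(6,4,10,8,9) less_imp_le[OF assms(11)] assms(12)]
    by (intro exI[of _ "C' * (layer_const \<beta> (b y0) a + 1 / \<beta>)"] conjI allI impI; (elim conjE)?)
      blast+
qed

end
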